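(* Let $N,K\ge 1$ be integers, $\mathbf{g}\in\mathbb{C}^{N}$, $\mathbf{h}_{r,k}\in\mathbb{C}^{N}$ and $h_{d,k}\in\mathbb{C}$ for $k=1,\dots,K$, with all entries of $\mathbf{g}$ and of every $\mathbf{h}_{r,k}$ nonzero and every $h_{d,k}\neq 0$. Let $\sigma^2>0$, $\sigma_r^2>0$, $P_r>0$, $T_{\max}>0$ and $E_k>0$ ($k=1,\dots,K$). Put $\mathbf{q}_k=\mathrm{diag}(\mathbf{g}^H)\mathbf{h}_{r,k}$, $\mathbf{G}=\mathrm{diag}(|[\mathbf{g}]_1|^2,\dots,|[\mathbf{g}]_N|^2)$, $\mathbf{H}_{r,k}=\mathrm{diag}(|[\mathbf{h}_{r,k}]_1|^2,\dots,|[\mathbf{h}_{r,k}]_N|^2)$. Consider the problem $$\max_{\{\tau_k\},\{p_k\},\{\mathbf{v}_k\}}\ \sum_{k=1}^K \tau_k\log_2\!\Big(1+\frac{p_k|h_{d,k}+\mathbf{v}_k^H\mathbf{q}_k|^2}{\sigma^2+\sigma_r^2\mathbf{v}_k^H\mathbf{G}\mathbf{v}_k}\Big)$$ over $\tau_k\in\mathbb{R}$, $p_k\in\mathbb{R}$, $\mathbf{v}_k\in\mathbb{C}^N$, subject to $\tau_kp_k\le E_k$ for all $k$; $\sum_{k=1}^K\tau_k\le T_{\max}$; $\tau_k\ge 0,\ p_k\ge0$ for all $k$; and $p_k\mathbf{v}_k^H\mathbf{H}_{r,k}\mathbf{v}_k+\sigma_r^2\|\mathbf{v}_k\|^2\le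 P_r$ for all $k$. Then at any optimal solution of this problem, $\tau_kp_k=E_k$ for every $k\in\{1,\dots,K\}$.
   Context: This is the sum-throughput maximization for active-IRS-aided TDMA uplink: device $k$ transmits for time $\tau_k$ with power $p_k$ and available energy $E_k$; $\mathbf{v}_k$ is the IRS reflection/amplification vector used in device $k$'s slot; $P_r$ is the IRS amplification power budget. *)

theory Defs
  imports "HOL-Analysis.Analysis"
begin

text \<open>IRS elements are indexed by a finite type 'n (N = CARD('n)), devices by a
finite type 'k (K = CARD('k)). Vectors in C^N are complex^'n.\<close>

definition herm :: "complex^'n \<Rightarrow> complex^'n \<Rightarrow> complex" where
  "herm v w = (\<Sum>i\<in>UNIV. cnj (v $ i) * w $ i)"

definition qvec :: "complex^'n \<Rightarrow> complex^'n \<Rightarrow> complex^'n" where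
  "qvec g hr = (\<chi> i. cnj (g $ i) * hr $ i)"

text \<open>v^H diag(|a_1|^2,...,|a_N|^2) v\<close>
definition diag_quad :: "complex^'n \<Rightarrow> complex^'n \<Rightarrow> real" where
  "diag_quad a v = (\<Sum>i\<in>UNIV. (cmod (a $ i))^2 * (cmod (v $ i))^2)"

definition objective ::
  "real \<Rightarrow> real \<Rightarrow> complex^'n \<Rightarrow> ('k \<Rightarrow> complex^'n) \<Rightarrow> ('k \<Rightarrow> complex)
   \<Rightarrow> ('k \<Rightarrow> real) \<Rightarrow> ('k \<Rightarrow> real) \<Rightarrow> ('k \<Rightarrow> complex^'n) \<Rightarrow> real" where
  "objective \<sigma>2 \<sigma>r2 g hr hdir \<tau> p v =
     (\<Sum>k\<in>UNIV. \<tau> k * log 2 (1 + p k * (cmod (hdir k + herm (v k) (qvec g (hr k))))^2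
                  / (\<sigma>2 + \<sigma>r2 * diag_quad g (v k))))"

definition feasible ::
  "real \<Rightarrow> real \<Rightarrow> real \<Rightarrow> ('k \<Rightarrow> real) \<Rightarrow> ('k \<Rightarrow> complex^'n)
   \<Rightarrow> ('k \<Rightarrow> real) \<Rightarrow> ('k \<Rightarrow> real) \<Rightarrow> ('k \<Rightarrow> complex^'n) \<Rightarrow> bool" where
  "feasible \<sigma>r2 Pr Tmax E hr \<tau> p v \<longleftrightarrow>
     (\<forall>k. \<tau> k * p k \<le> E k) \<and>
     (\<Sum>k\<in>UNIV. \<tau> k) \<le> Tmax \<and>
     (\<forall>k. \<tau> k \<ge> 0 \<and> p k \<ge> 0) \<and>
     (\<forall>k. p k * diag_quad (hr k) (v k) + \<sigma>r2 * (norm (v k))^2 \<le> Pr)"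

end

theory Submission
  imports Defs
begin

text \<open>If device k leaves energy unused, i.e. tau k * p k < E k, a feasible point with a strictly
  larger objective exists. If tau k > 0, raise p k to p' = E k / tau k and replace v k by
  beta = sqrt (p k / p') times its co-phased version: the amplification power and the SNR
  denominator do not grow, while by the triangle inequality the received amplitude
  sqrt p' * (|h_d| + beta * S) = sqrt p' * |h_d| + sqrt (p k) * S, with S = sum_i |v_i| |q_i|,
  strictly exceeds sqrt (p k) * |h_d + v^H q|. If tau k = 0, give device k a slot of length e,
  taken from idle time or from a device j with tau j > 0, together with all of its energy: with
  the IRS switched off its rate log2 (1 + c / e) exceeds the rate of device j once e is small.\<close>

definition snr :: "real \<Rightarrow> real \<Rightarrow> complex^'n \<Rightarrow> complex \<Rightarrow> complex^'n \<Rightarrow> real \<Rightarrow> complex^'n \<Rightarrow> real"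
  where "snr \<sigma>2 \<sigma>r2 g z q p v = p * (cmod (z + herm v q))^2 / (\<sigma>2 + \<sigma>r2 * diag_quad g v)"

lemma objective_eq_sum_snr:
  "objective \<sigma>2 \<sigma>r2 g hr hdir \<tau> p v =
     (\<Sum>k\<in>UNIV. \<tau> k * log 2 (1 + snr \<sigma>2 \<sigma>r2 g (hdir k) (qvec g (hr k)) (p k) (v k)))"
  by (simp add: objective_def snr_def)

lemma diag_quad_nonneg: "0 \<le> diag_quad a v"
  by (simp add: diag_quad_def sum_nonneg)

lemma diag_quad_zero [simp]: "diag_quad a 0 = 0"
  by (simp add: diag_quad_def)

lemma diag_quad_scaleR: "diag_quad a (c *\<^sub>R v) = c^2 * diag_quad a v"
  by (simp add: diag_quad_def sum_distrib_left power_mult_distrib algebra_simps)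

lemma herm_zero_left [simp]: "herm 0 q = 0"
  by (simp add: herm_def)

lemma herm_scaleR_left: "herm (c *\<^sub>R v) q = c *\<^sub>R herm v q"
  by (simp add: herm_def scaleR_sum_right)

lemma norm_add_herm_le: "cmod (z + herm v q) \<le> cmod z + (\<Sum>i\<in>UNIV. cmod (v $ i) * cmod (q $ i))"
proof -
  have "cmod (herm v q) \<le> (\<Sum>i\<in>UNIV. cmod (v $ i) * cmod (q $ i))"
    unfolding herm_def using norm_sum[of "\<lambda>i. cnj (v $ i) * q $ i" UNIV]
    by (simp add: norm_mult)
  then show ?thesis
    using norm_triangle_ineq[of z "herm v q"] by linarith
qed

lemma snr_nonneg: "0 \<le> p \<Longrightarrow> 0 < \<sigma>2 \<Longrightarrow> 0 \<le> \<sigma>r2 \<Longrightarrow> 0 \<le> snr \<sigma>2 \<sigma>r2 g z q p v"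
  unfolding snr_def using diag_quad_nonneg[of g v] by (intro divide_nonneg_pos add_pos_nonneg) auto

lemma snr_zero_beam: "snr \<sigma>2 \<sigma>r2 g z q p 0 = p * (cmod z)^2 / \<sigma>2"
  by (simp add: snr_def)

text \<open>Co-phasing of the reflected paths with the direct path z. Since cis (Arg 0) = 1, no
  nonvanishing assumption on z or on the entries of q is needed.\<close>

definition aligned_beam :: "complex \<Rightarrow> complex^'n \<Rightarrow> complex^'n \<Rightarrow> complex^'n"
  where "aligned_beam z q v = (\<chi> i. of_real (cmod (v $ i)) * cnj (cis (Arg z)) * cis (Arg (q $ i)))"

lemma norm_aligned_beam_nth [simp]: "cmod (aligned_beam z q v $ i) = cmod (v $ i)"
  by (simp add: aligned_beam_def norm_mult)

lemma diag_quad_aligned_beam [simp]: "diag_quad a (aligned_beam z q v) = diag_quad a v"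
  by (simp add: diag_quad_def)

lemma norm_aligned_beam [simp]: "norm (aligned_beam z q v) = norm v"
  by (simp add: norm_vec_def)

lemma cnj_cis_Arg_mult: "cnj (cis (Arg w)) * w = of_real (cmod w)"
proof -
  have "cnj (cis (Arg w)) * w = of_real (cmod w) * (cnj (cis (Arg w)) * cis (Arg w))"
    by (subst (2) rcis_cmod_Arg[symmetric]) (simp add: rcis_def)
  also have "cnj (cis (Arg w)) * cis (Arg w) = 1"
    by (simp add: cis_cnj cis_mult)
  finally show ?thesis by simp
qed

lemma herm_aligned_beam:
  "herm (aligned_beam z q v) q = of_real (\<Sum>i\<in>UNIV. cmod (v $ i) * cmod (q $ i)) * cis (Arg z)"
proof -
  have "cnj (aligned_beam z q v $ i) * q $ i = of_real (cmod (v $ i) * cmod (q $ i)) * cis (Arg z)" for i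
    using cnj_cis_Arg_mult[of "q $ i"] by (simp add: aligned_beam_def mult_ac)
  then show ?thesis
    by (simp add: herm_def sum_distrib_right)
qed

lemma norm_add_herm_aligned_beam:
  assumes "0 \<le> \<beta>"
  shows "cmod (z + herm (\<beta> *\<^sub>R aligned_beam z q v) q) =
           cmod z + \<beta> * (\<Sum>i\<in>UNIV. cmod (v $ i) * cmod (q $ i))"
proof -
  let ?S = "\<Sum>i\<in>UNIV. cmod (v $ i) * cmod (q $ i)"
  have z: "of_real (cmod z) * cis (Arg z) = z"
    using rcis_cmod_Arg[of z] by (simp add: rcis_def)
  have "z + herm (\<beta> *\<^sub>R aligned_beam z q v) q =
          of_real (cmod z) * cis (Arg z) + \<beta> *\<^sub>R (of_real ?S * cis (Arg z))"
    by (simp only: herm_scaleR_left herm_aligned_beam z)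
  also have "\<dots> = of_real (cmod z + \<beta> * ?S) * cis (Arg z)"
    by (simp add: scaleR_conv_of_real algebra_simps)
  finally have "z + herm (\<beta> *\<^sub>R aligned_beam z q v) q = of_real (cmod z + \<beta> * ?S) * cis (Arg z)" .
  then have "cmod (z + herm (\<beta> *\<^sub>R aligned_beam z q v) q) = \<bar>cmod z + \<beta> * ?S\<bar>"
    by (simp only: norm_mult norm_of_real norm_cis) simp
  moreover have "0 \<le> ?S" by (simp add: sum_nonneg)
  ultimately show ?thesis
    using assms by simp
qed

lemma snr_less_aligned_beam:
  assumes "z \<noteq> 0" "0 < \<sigma>2" "0 \<le> \<sigma>r2" "0 \<le> p" "p < p'"
  shows "snr \<sigma>2 \<sigma>r2 g z q p v < snr \<sigma>2 \<sigma>r2 g z q p' (sqrt (p / p') *\<^sub>R aligned_beam z q v)"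
proof -
  define \<beta> where "\<beta> = sqrt (p / p')"
  define S where "S = (\<Sum>i\<in>UNIV. cmod (v $ i) * cmod (q $ i))"
  have "0 < p'" "0 \<le> \<beta>" "\<beta> \<le> 1"
    using assms by (auto simp: \<beta>_def)
  have "sqrt p' * \<beta> = sqrt p"
    using \<open>0 < p'\<close> by (simp add: \<beta>_def real_sqrt_divide)
  have "0 \<le> S" by (simp add: S_def sum_nonneg)
  have "sqrt p * cmod (z + herm v q) \<le> sqrt p * (cmod z + S)"
    using norm_add_herm_le[of z v q] assms by (intro mult_left_mono) (auto simp: S_def)
  also have "\<dots> < sqrt p' * cmod z + sqrt p * S"
    using assms by (simp add: algebra_simps)
  also have "\<dots> = sqrt p' * (cmod z + \<beta> * S)"
    using \<open>sqrt p' * \<beta> = sqrt p\<close> by (simp add: algebra_simps)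
  finally have "(sqrt p * cmod (z + herm v q))^2 < (sqrt p' * (cmod z + \<beta> * S))^2"
    using assms by (intro power_strict_mono) auto
  then have num: "p * (cmod (z + herm v q))^2 < p' * (cmod z + \<beta> * S)^2"
    using assms by (simp add: power_mult_distrib)
  have "0 \<le> diag_quad g v" by (rule diag_quad_nonneg)
  then have "0 < \<sigma>2 + \<sigma>r2 * (\<beta>^2 * diag_quad g v)"
      and "\<sigma>2 + \<sigma>r2 * (\<beta>^2 * diag_quad g v) \<le> \<sigma>2 + \<sigma>r2 * diag_quad g v"
    using assms \<open>0 \<le> \<beta>\<close> \<open>\<beta> \<le> 1\<close>
    by (auto intro!: add_pos_nonneg mult_left_mono mult_left_le_one_le simp: power_le_one)
  moreover have "0 \<le> p * (cmod (z + herm v q))^2"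
    using assms by simp
  ultimately show ?thesis
    unfolding snr_def \<beta>_def[symmetric] norm_add_herm_aligned_beam[OF \<open>0 \<le> \<beta>\<close>] diag_quad_scaleR
      S_def[symmetric] using num by (intro frac_less) auto
qed

lemma power_aligned_beam_le:
  fixes z :: complex and q v :: "complex^'n"
  assumes "0 \<le> p" "p \<le> p'" "0 \<le> \<sigma>r2"
  defines "w \<equiv> sqrt (p / p') *\<^sub>R aligned_beam z q v"
  shows "p' * diag_quad a w + \<sigma>r2 * (norm w)^2 \<le> p * diag_quad a v + \<sigma>r2 * (norm v)^2"
proof -
  define \<beta>2 where "\<beta>2 = (sqrt (p / p'))^2"
  have "p' * \<beta>2 = p"
    using assms by (cases "p' = 0") (auto simp: \<beta>2_def)
  have "0 \<le> \<beta>2" "\<beta>2 \<le> 1"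
    using assms by (auto simp: \<beta>2_def divide_le_eq_1)
  have "p' * diag_quad a w + \<sigma>r2 * (norm w)^2 = (p' * \<beta>2) * diag_quad a v + \<sigma>r2 * (\<beta>2 * (norm v)^2)"
    by (simp add: w_def \<beta>2_def diag_quad_scaleR power_mult_distrib)
  also have "\<dots> \<le> p * diag_quad a v + \<sigma>r2 * (norm v)^2"
    using \<open>p' * \<beta>2 = p\<close> \<open>0 \<le> \<beta>2\<close> \<open>\<beta>2 \<le> 1\<close> assms
    by (auto intro!: mult_left_mono mult_left_le_one_le)
  finally show ?thesis .
qed

lemma sum_fun_upd_UNIV:
  fixes f :: "'k::finite \<Rightarrow> 'a::ab_group_add"
  shows "sum (f(k := a)) UNIV = sum f UNIV - f k + a"
  using sum.remove[of UNIV k "f(k := a)"] sum.remove[of UNIV k f]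
  by (simp add: sum.cong[of "UNIV - {k}" _ "f(k := a)" f])

lemma objective_fun_upd:
  fixes \<tau> :: "'k::finite \<Rightarrow> real"
  shows "objective \<sigma>2 \<sigma>r2 g hr hdir (\<tau>(k := t)) (p(k := x)) (v(k := w)) =
     objective \<sigma>2 \<sigma>r2 g hr hdir \<tau> p v
     - \<tau> k * log 2 (1 + snr \<sigma>2 \<sigma>r2 g (hdir k) (qvec g (hr k)) (p k) (v k))
     + t * log 2 (1 + snr \<sigma>2 \<sigma>r2 g (hdir k) (qvec g (hr k)) x w)"
proof -
  let ?r = "\<lambda>i. \<tau> i * log 2 (1 + snr \<sigma>2 \<sigma>r2 g (hdir i) (qvec g (hr i)) (p i) (v i))"
  have "objective \<sigma>2 \<sigma>r2 g hr hdir (\<tau>(k := t)) (p(k := x)) (v(k := w)) =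
          sum (?r(k := t * log 2 (1 + snr \<sigma>2 \<sigma>r2 g (hdir k) (qvec g (hr k)) x w))) UNIV"
    unfolding objective_eq_sum_snr by (rule sum.cong) auto
  also have "\<dots> = sum ?r UNIV - ?r k + t * log 2 (1 + snr \<sigma>2 \<sigma>r2 g (hdir k) (qvec g (hr k)) x w)"
    by (rule sum_fun_upd_UNIV)
  finally show ?thesis
    by (simp add: objective_eq_sum_snr)
qed

lemma feasible_fun_upd:
  fixes \<tau> :: "'k::finite \<Rightarrow> real"
  assumes "feasible \<sigma>r2 Pr Tmax E hr \<tau> p v"
    and "0 \<le> t" "0 \<le> x" "t * x \<le> E k" "sum \<tau> UNIV - \<tau> k + t \<le> Tmax"
    and "x * diag_quad (hr k) w + \<sigma>r2 * (norm w)^2 \<le> Pr"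
  shows "feasible \<sigma>r2 Pr Tmax E hr (\<tau>(k := t)) (p(k := x)) (v(k := w))"
  using assms unfolding feasible_def sum_fun_upd_UNIV by auto

lemma less_log_one_plus_div:
  assumes "0 < e" "e * 2 powr r \<le> c"
  shows "r < log 2 (1 + c / e)"
proof -
  have "2 powr r \<le> c / e"
    using assms by (simp add: pos_le_divide_eq mult.commute)
  then have "2 powr r < 1 + c / e"
    by simp
  moreover have "0 < 2 powr r"
    by simp
  ultimately show ?thesis
    by (subst less_log_iff) linarith+
qed

locale irs_tdma_uplink =
  fixes \<sigma>2 \<sigma>r2 Pr Tmax :: real and g :: "complex^'n"
    and hr :: "'k::finite \<Rightarrow> complex^'n" and hdir :: "'k \<Rightarrow> complex" and E :: "'k \<Rightarrow> real"
  assumes hdir_nonzero: "hdir k \<noteq> 0"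
    and noise_pos: "0 < \<sigma>2" and amp_noise_nonneg: "0 \<le> \<sigma>r2"
    and Pr_nonneg: "0 \<le> Pr" and Tmax_pos: "0 < Tmax" and energy_pos: "0 < E k"
begin

abbreviation feas :: "('k \<Rightarrow> real) \<Rightarrow> ('k \<Rightarrow> real) \<Rightarrow> ('k \<Rightarrow> complex^'n) \<Rightarrow> bool"
  where "feas \<equiv> feasible \<sigma>r2 Pr Tmax E hr"

abbreviation obj :: "('k \<Rightarrow> real) \<Rightarrow> ('k \<Rightarrow> real) \<Rightarrow> ('k \<Rightarrow> complex^'n) \<Rightarrow> real"
  where "obj \<equiv> objective \<sigma>2 \<sigma>r2 g hr hdir"

abbreviation rate :: "'k \<Rightarrow> real \<Rightarrow> complex^'n \<Rightarrow> real"
  where "rate k x w \<equiv> log 2 (1 + snr \<sigma>2 \<sigma>r2 g (hdir k) (qvec g (hr k)) x w)"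

definition improvable :: "('k \<Rightarrow> real) \<Rightarrow> ('k \<Rightarrow> real) \<Rightarrow> ('k \<Rightarrow> complex^'n) \<Rightarrow> bool"
  where "improvable \<tau> p v \<longleftrightarrow> (\<exists>\<tau>' p' v'. feas \<tau>' p' v' \<and> obj \<tau> p v < obj \<tau>' p' v')"

lemma improvableI: "feas \<tau>' p' v' \<Longrightarrow> obj \<tau> p v < obj \<tau>' p' v' \<Longrightarrow> improvable \<tau> p v"
  unfolding improvable_def by blast

lemma rate_idle_beam: "rate k (E k / e) 0 = log 2 (1 + (E k * (cmod (hdir k))^2 / \<sigma>2) / e)"
  by (simp add: snr_zero_beam mult.commute)

lemma idle_gain_pos: "0 < E k * (cmod (hdir k))^2 / \<sigma>2"
  using energy_pos hdir_nonzero noise_pos by simp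

lemma improvable_raise_power:
  assumes feas: "feas \<tau> p v" and "0 < \<tau> k" "\<tau> k * p k < E k"
  shows "improvable \<tau> p v"
proof -
  define p' where "p' = E k / \<tau> k"
  define w where "w = sqrt (p k / p') *\<^sub>R aligned_beam (hdir k) (qvec g (hr k)) (v k)"
  have "0 \<le> p k" "p k * diag_quad (hr k) (v k) + \<sigma>r2 * (norm (v k))^2 \<le> Pr"
    using feas by (auto simp: feasible_def)
  have "p k < p'" "\<tau> k * p' = E k"
    using assms by (simp_all add: p'_def pos_less_divide_eq mult.commute)
  then have "0 \<le> p'"
    using \<open>0 \<le> p k\<close> by linarith
  have "p' * diag_quad (hr k) w + \<sigma>r2 * (norm w)^2 \<le> Pr"
    using power_aligned_beam_le[of "p k" p' \<sigma>r2] \<open>0 \<le> p k\<close> \<open>p k < p'\<close> amp_noise_nonneg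
      \<open>p k * diag_quad (hr k) (v k) + \<sigma>r2 * (norm (v k))^2 \<le> Pr\<close>
    unfolding w_def by (meson less_imp_le order_trans)
  then have feas': "feas (\<tau>(k := \<tau> k)) (p(k := p')) (v(k := w))"
    using feas \<open>0 < \<tau> k\<close> \<open>0 \<le> p'\<close> \<open>\<tau> k * p' = E k\<close>
    by (intro feasible_fun_upd) (auto simp: feasible_def)
  have "snr \<sigma>2 \<sigma>r2 g (hdir k) (qvec g (hr k)) (p k) (v k) < snr \<sigma>2 \<sigma>r2 g (hdir k) (qvec g (hr k)) p' w"
    unfolding w_def
    by (rule snr_less_aligned_beam[OF hdir_nonzero noise_pos amp_noise_nonneg \<open>0 \<le> p k\<close> \<open>p k < p'\<close>])
  moreover have "0 \<le> snr \<sigma>2 \<sigma>r2 g (hdir k) (qvec g (hr k)) (p k) (v k)"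
    by (rule snr_nonneg[OF \<open>0 \<le> p k\<close> noise_pos amp_noise_nonneg])
  ultimately have "rate k (p k) (v k) < rate k p' w"
    by simp
  moreover have "obj (\<tau>(k := \<tau> k)) (p(k := p')) (v(k := w)) =
                   obj \<tau> p v - \<tau> k * rate k (p k) (v k) + \<tau> k * rate k p' w"
    by (rule objective_fun_upd)
  ultimately show ?thesis
    using feas' \<open>0 < \<tau> k\<close> by (intro improvableI) auto
qed

lemma improvable_grant_slack_time:
  assumes feas: "feas \<tau> p v" and "\<tau> k = 0" "sum \<tau> UNIV < Tmax"
  shows "improvable \<tau> p v"
proof -
  define t where "t = Tmax - sum \<tau> UNIV"
  have "0 < t" "sum \<tau> UNIV - \<tau> k + t = Tmax"
    using assms by (simp_all add: t_def)
  then have "feas (\<tau>(k := t)) (p(k := E k / t)) (v(k := 0))"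
    using feas energy_pos[of k] Pr_nonneg by (intro feasible_fun_upd) auto
  moreover have "0 < (E k * (cmod (hdir k))^2 / \<sigma>2) / t"
    using idle_gain_pos \<open>0 < t\<close> by (rule divide_pos_pos)
  then have "0 < log 2 (1 + (E k * (cmod (hdir k))^2 / \<sigma>2) / t)"
    by (subst zero_less_log_cancel_iff) auto
  then have "obj \<tau> p v < obj (\<tau>(k := t)) (p(k := E k / t)) (v(k := 0))"
    using \<open>0 < t\<close> \<open>\<tau> k = 0\<close> by (simp add: objective_fun_upd rate_idle_beam)
  ultimately show ?thesis
    by (rule improvableI)
qed

lemma improvable_transfer_time:
  assumes feas: "feas \<tau> p v" and "\<tau> k = 0" "0 < \<tau> j"
  shows "improvable \<tau> p v"
proof -
  define c where "c = E k * (cmod (hdir k))^2 / \<sigma>2"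
  define r where "r = rate j (p j) (v j)"
  define e where "e = min (\<tau> j) (c / 2 powr r)"
  define \<tau>1 where "\<tau>1 = \<tau>(j := \<tau> j - e)"
  have "0 < c"
    unfolding c_def by (rule idle_gain_pos)
  then have "0 < e"
    using \<open>0 < \<tau> j\<close> by (simp add: e_def)
  have "e \<le> \<tau> j" "e \<le> c / 2 powr r"
    by (simp_all add: e_def)
  then have "e * 2 powr r \<le> c"
    by (simp add: pos_le_divide_eq)
  have "j \<noteq> k"
    using assms by auto
  have "0 \<le> p j" "\<tau> j * p j \<le> E j"
    using feas by (auto simp: feasible_def)
  moreover have "(\<tau> j - e) * p j \<le> \<tau> j * p j"
    using \<open>0 < e\<close> \<open>0 \<le> p j\<close> by (intro mult_right_mono) auto
  ultimately have "(\<tau> j - e) * p j \<le> E j"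
    by linarith
  then have "feas (\<tau>(j := \<tau> j - e)) (p(j := p j)) (v(j := v j))"
    using feas \<open>0 < e\<close> \<open>e \<le> \<tau> j\<close> \<open>0 \<le> p j\<close>
    by (intro feasible_fun_upd) (auto simp: feasible_def)
  then have "feas \<tau>1 p v"
    by (simp add: \<tau>1_def)
  moreover have "sum \<tau>1 UNIV - \<tau>1 k + e = sum \<tau> UNIV"
    unfolding \<tau>1_def sum_fun_upd_UNIV using \<open>j \<noteq> k\<close> \<open>\<tau> k = 0\<close> by simp
  ultimately have "feas (\<tau>1(k := e)) (p(k := E k / e)) (v(k := 0))"
    using feas \<open>0 < e\<close> energy_pos[of k] Pr_nonneg
    by (intro feasible_fun_upd) (auto simp: feasible_def)
  moreover have "obj (\<tau>1(k := e)) (p(k := E k / e)) (v(k := 0)) = obj \<tau> p v + e * (log 2 (1 + c / e) - r)"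
    using objective_fun_upd[of \<sigma>2 \<sigma>r2 g hr hdir \<tau> j "\<tau> j - e" p "p j" v "v j"]
      objective_fun_upd[of \<sigma>2 \<sigma>r2 g hr hdir \<tau>1 k e p "E k / e" v 0] \<open>j \<noteq> k\<close> \<open>\<tau> k = 0\<close>
    by (simp add: \<tau>1_def r_def c_def rate_idle_beam algebra_simps)
  moreover have "r < log 2 (1 + c / e)"
    using \<open>0 < e\<close> \<open>e * 2 powr r \<le> c\<close> by (rule less_log_one_plus_div)
  ultimately show ?thesis
    using \<open>0 < e\<close> by (intro improvableI) auto
qed

lemma improvable_idle_device:
  assumes "feas \<tau> p v" and "\<tau> k = 0"
  shows "improvable \<tau> p v"
proof (cases "sum \<tau> UNIV < Tmax")
  case True
  with assms show ?thesis by (rule improvable_grant_slack_time)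
next
  case False
  then have "0 < sum \<tau> UNIV"
    using Tmax_pos by linarith
  then obtain j where "0 < \<tau> j"
    by (metis not_less sum_nonpos)
  with assms show ?thesis by (intro improvable_transfer_time)
qed

lemma energy_exhausted_if_not_improvable:
  assumes "feas \<tau> p v" and "\<not> improvable \<tau> p v"
  shows "\<tau> k * p k = E k"
proof (rule ccontr)
  assume "\<tau> k * p k \<noteq> E k"
  moreover have "\<tau> k * p k \<le> E k" "0 \<le> \<tau> k"
    using \<open>feas \<tau> p v\<close> by (auto simp: feasible_def)
  ultimately have "\<tau> k * p k < E k" "0 < \<tau> k \<or> \<tau> k = 0"
    by auto
  then have "improvable \<tau> p v"
    using \<open>feas \<tau> p v\<close> improvable_raise_power improvable_idle_device by blast
  with \<open>\<not> improvable \<tau> p v\<close> show False ..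
qed

end

theorem lemma1:
  fixes g :: "complex^'n" and hr :: "'k::finite \<Rightarrow> complex^'n"
    and hdir :: "'k \<Rightarrow> complex"
    and \<sigma>2 \<sigma>r2 Pr Tmax :: real and E :: "'k \<Rightarrow> real"
    and \<tau> p :: "'k \<Rightarrow> real" and v :: "'k \<Rightarrow> complex^'n"
  assumes g_nz: "\<forall>i. g $ i \<noteq> 0"
    and hr_nz: "\<forall>k i. hr k $ i \<noteq> 0"
    and hd_nz: "\<forall>k. hdir k \<noteq> 0"
    and "\<sigma>2 > 0" and "\<sigma>r2 > 0" and "Pr > 0" and "Tmax > 0"
    and "\<forall>k. E k > 0"
    and opt_feas: "feasible \<sigma>r2 Pr Tmax E hr \<tau> p v"
    and opt_max: "\<forall>\<tau>' p' v'. feasible \<sigma>r2 Pr Tmax E hr \<tau>' p' v' \<longrightarrow>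
          objective \<sigma>2 \<sigma>r2 g hr hdir \<tau>' p' v' \<le> objective \<sigma>2 \<sigma>r2 g hr hdir \<tau> p v"
  shows "\<forall>k. \<tau> k * p k = E k"
proof -
  interpret irs_tdma_uplink \<sigma>2 \<sigma>r2 Pr Tmax g hr hdir E
    using assms by unfold_locales auto
  have "\<not> improvable \<tau> p v"
    using opt_max by (auto simp: improvable_def not_less[symmetric])
  then show ?thesis
    using opt_feas energy_exhausted_if_not_improvable by blast
qed

end
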